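(* Fourier matrices $F$ and $G$ of the same size, with indexing groups $I_F$ and $I_G$, are permutation equivalent, i.e. $P_{\chi'}\,F\,P_{\chi''}^T=G$ for some bijections $\chi',\chi'':I_G\to I_F$, if and only if the groups $I_F$ and $I_G$ are isomorphic.
   Context: For $n\ge1$, $F_n$ is the $n\times n$ matrix with rows and columns indexed by $\mathbb Z_n$ and entries $e^{2\pi i\,\tilde i\tilde j/n}$. A Fourier matrix is $F=F_{N_1}\otimes\cdots\otimes F_{N_r}$ of size $N=N_1\cdots N_r$, indexed by $I_F=\mathbb Z_{N_1}\times\cdots\times\mathbb Z_{N_r}$ with $F_{i,j}=\prod_x(F_{N_x})_{i_x,j_x}$; group indices correspond to ordinary indices via lexicographic order of $I_F$. For a bijection $\varphi:I_G\to I_F$, $P_\varphi$ is the $N\times N$ permutation matrix (rows indexed by $I_G$, columns by $I_F$) with $(P_\varphi)_{i,\varphi(i)}=1$. *)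

theory Defs
  imports Complex_Main "HOL-Algebra.Group"
begin

text \<open>A Fourier matrix F = F_{N_1} (x) ... (x) F_{N_r} is described by the list Ns = [N_1,...,N_r].
  Its index set I_F = Z_{N_1} x ... x Z_{N_r} is represented by lists of representatives.\<close>

definition fourier_index :: "nat list \<Rightarrow> nat list set" where
  "fourier_index Ns = {i. length i = length Ns \<and> (\<forall>x<length Ns. i ! x < Ns ! x)}"

definition fourier_mat :: "nat list \<Rightarrow> nat list \<Rightarrow> nat list \<Rightarrow> complex" where
  "fourier_mat Ns i j =
     (\<Prod>x<length Ns. exp (2 * of_real pi * \<i> * of_nat (i ! x) * of_nat (j ! x) / of_nat (Ns ! x)))"

definition fourier_group :: "nat list \<Rightarrow> nat list monoid" where
  "fourier_group Ns =
     \<lparr> carrier = fourier_index Ns,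
       mult = (\<lambda>i j. map (\<lambda>x. (i ! x + j ! x) mod (Ns ! x)) [0..<length Ns]),
       one = replicate (length Ns) 0 \<rparr>"

definition perm_mat :: "('a \<Rightarrow> 'b) \<Rightarrow> 'a \<Rightarrow> 'b \<Rightarrow> complex" where
  "perm_mat \<phi> i j = (if j = \<phi> i then 1 else 0)"

definition idx_mult :: "'b set \<Rightarrow> ('a \<Rightarrow> 'b \<Rightarrow> complex) \<Rightarrow> ('b \<Rightarrow> 'c \<Rightarrow> complex) \<Rightarrow> 'a \<Rightarrow> 'c \<Rightarrow> complex" where
  "idx_mult S A B i k = (\<Sum>j\<in>S. A i j * B j k)"

definition idx_transpose :: "('a \<Rightarrow> 'b \<Rightarrow> complex) \<Rightarrow> 'b \<Rightarrow> 'a \<Rightarrow> complex" where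
  "idx_transpose A j i = A i j"

end

theory Submission
  imports Defs "HOL-Analysis.Complex_Transcendental"
begin

text \<open>A Fourier matrix is the character table of its indexing group: the row of \<open>i\<close> is the
  character \<open>j \<mapsto> F i j\<close>, the rows of distinct indices differ, and every character occurs as
  a row. If \<open>F\<^sub>N (\<chi>' a) (\<chi>'' b) = F\<^sub>M a b\<close>, multiplicativity of the rows of \<open>F\<^sub>M\<close> therefore
  forces \<open>\<chi>'\<close> to be additive, i.e. an isomorphism. Conversely, an isomorphism turns each
  column of \<open>F\<^sub>M\<close> into a character of the other group, hence into a column of \<open>F\<^sub>N\<close>,
  which defines \<open>\<chi>''\<close>.\<close>

lemma fourier_group_carrier [simp]: "carrier (fourier_group Ns) = fourier_index Ns"
  by (simp add: fourier_group_def)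

lemma fourier_group_one [simp]: "\<one>\<^bsub>fourier_group Ns\<^esub> = replicate (length Ns) 0"
  by (simp add: fourier_group_def)

lemma fourier_group_mult:
  "i \<otimes>\<^bsub>fourier_group Ns\<^esub> j = map (\<lambda>x. (i ! x + j ! x) mod (Ns ! x)) [0..<length Ns]"
  by (simp add: fourier_group_def)

lemma finite_fourier_index: "finite (fourier_index Ns)"
proof (rule finite_subset)
  show "fourier_index Ns \<subseteq> {i. set i \<subseteq> {..<sum_list Ns} \<and> length i = length Ns}"
    by (auto simp: fourier_index_def in_set_conv_nth)
      (metis elem_le_sum_list less_le_trans)
qed (rule finite_lists_length_eq, simp)

lemma fourier_group_comm_group:
  assumes "\<forall>x<length Ns. Ns ! x \<ge> 1"
  shows "comm_group (fourier_group Ns)"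
proof (rule comm_groupI)
  fix i assume i: "i \<in> carrier (fourier_group Ns)"
  let ?i' = "map (\<lambda>x. (Ns ! x - i ! x) mod Ns ! x) [0..<length Ns]"
  have "?i' \<in> carrier (fourier_group Ns)" "?i' \<otimes>\<^bsub>fourier_group Ns\<^esub> i = \<one>\<^bsub>fourier_group Ns\<^esub>"
    using i assms by (auto simp: fourier_index_def fourier_group_mult mod_add_left_eq
        intro!: nth_equalityI)
  then show "\<exists>i'\<in>carrier (fourier_group Ns). i' \<otimes>\<^bsub>fourier_group Ns\<^esub> i = \<one>\<^bsub>fourier_group Ns\<^esub>"
    by blast
qed (use assms in \<open>auto simp: fourier_index_def fourier_group_mult ac_simps
        mod_add_left_eq mod_add_right_eq intro!: nth_equalityI\<close>)

definition character :: "('a, 'b) monoid_scheme \<Rightarrow> ('a \<Rightarrow> complex) \<Rightarrow> bool" where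
  "character G c \<longleftrightarrow> (\<forall>x\<in>carrier G. c x \<noteq> 0) \<and>
     (\<forall>x\<in>carrier G. \<forall>y\<in>carrier G. c (x \<otimes>\<^bsub>G\<^esub> y) = c x * c y)"

lemma character_one:
  assumes "monoid G" "character G c"
  shows "c \<one>\<^bsub>G\<^esub> = 1"
proof -
  have one: "\<one>\<^bsub>G\<^esub> \<in> carrier G" "\<one>\<^bsub>G\<^esub> \<otimes>\<^bsub>G\<^esub> \<one>\<^bsub>G\<^esub> = \<one>\<^bsub>G\<^esub>"
    using assms(1) by (simp_all add: monoid.one_closed monoid.l_one)
  then have "c \<one>\<^bsub>G\<^esub> = c \<one>\<^bsub>G\<^esub> * c \<one>\<^bsub>G\<^esub>" "c \<one>\<^bsub>G\<^esub> \<noteq> 0"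
    using assms(2) unfolding character_def by metis+
  then show ?thesis by simp
qed

lemma character_nat_pow:
  assumes "monoid G" "character G c" "x \<in> carrier G"
  shows "c (x [^]\<^bsub>G\<^esub> (n::nat)) = c x ^ n"
proof (induction n)
  case 0
  show ?case using assms(1,2) by (simp add: character_one)
next
  case (Suc n)
  have "x [^]\<^bsub>G\<^esub> n \<in> carrier G" using assms(1,3) by (rule monoid.nat_pow_closed)
  then show ?case using Suc assms(2,3) by (simp add: character_def)
qed

lemma character_comp_hom:
  assumes "character H c" "h \<in> hom G H"
  shows "character G (\<lambda>x. c (h x))"
  using assms unfolding character_def hom_def by (simp add: Pi_iff)

lemma fourier_mat_sym: "fourier_mat Ns i j = fourier_mat Ns j i"
  unfolding fourier_mat_def by (rule prod.cong) (auto simp: mult_ac)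

lemma exp_root_unity_add_mod:
  assumes "(n::nat) \<ge> 1"
  shows "exp (2 * of_real pi * \<i> * of_nat ((a + b) mod n) * of_nat c / of_nat n) =
         exp (2 * of_real pi * \<i> * of_nat a * of_nat c / of_nat n) *
         exp (2 * of_real pi * \<i> * of_nat b * of_nat c / of_nat n)"
proof -
  have "exp (2 * of_real pi * \<i> * of_nat ((a + b) mod n) * of_nat c / of_nat n)
      = exp (2 * of_real pi * \<i> * of_nat ((a + b) mod n * c) / of_nat n)"
    by (simp add: mult.assoc)
  also have "\<dots> = exp (2 * of_real pi * \<i> * of_nat ((a + b) * c) / of_nat n)"
    using assms by (subst complex_root_unity_eq) (auto simp: mod_mult_left_eq)
  also have "\<dots> = exp (2 * of_real pi * \<i> * of_nat a * of_nat c / of_nat n +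
                      2 * of_real pi * \<i> * of_nat b * of_nat c / of_nat n)"
    by (simp add: algebra_simps add_divide_distrib)
  finally show ?thesis by (simp add: exp_add)
qed

lemma character_fourier_row:
  assumes "\<forall>x<length Ns. Ns ! x \<ge> 1"
  shows "character (fourier_group Ns) (\<lambda>i. fourier_mat Ns i j)"
  unfolding character_def
proof (intro conjI ballI)
  fix i i'
  show "fourier_mat Ns (i \<otimes>\<^bsub>fourier_group Ns\<^esub> i') j = fourier_mat Ns i j * fourier_mat Ns i' j"
    unfolding fourier_mat_def fourier_group_mult prod.distrib[symmetric]
    by (rule prod.cong[OF refl], simp, rule exp_root_unity_add_mod) (use assms in simp)
qed (simp add: fourier_mat_def)

text \<open>The unit vector is \<open>1 mod N\<^sub>x\<close> rather than \<open>1\<close> in coordinate \<open>x\<close>, so that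
  it is the neutral element for a trivial factor \<open>\<int>\<^sub>1\<close>.\<close>

definition fourier_unit :: "nat list \<Rightarrow> nat \<Rightarrow> nat list" where
  "fourier_unit Ns x = map (\<lambda>y. if y = x then 1 mod Ns ! x else 0) [0..<length Ns]"

lemma fourier_unit_in_index:
  assumes "\<forall>y<length Ns. Ns ! y \<ge> 1" "x < length Ns"
  shows "fourier_unit Ns x \<in> fourier_index Ns"
  using assms by (auto simp: fourier_unit_def fourier_index_def)

lemma fourier_unit_nat_pow:
  "fourier_unit Ns x [^]\<^bsub>fourier_group Ns\<^esub> n =
     map (\<lambda>y. if y = x then n mod Ns ! x else 0) [0..<length Ns]"
proof (induction n)
  case (Suc n)
  then show ?case
    by (simp add: fourier_group_mult fourier_unit_def) (simp add: mod_Suc_eq)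
qed (rule nth_equalityI, simp_all)

lemma fourier_unit_order:
  "fourier_unit Ns x [^]\<^bsub>fourier_group Ns\<^esub> (Ns ! x) = \<one>\<^bsub>fourier_group Ns\<^esub>"
  unfolding fourier_unit_nat_pow by (rule nth_equalityI) simp_all

lemma fourier_mat_unit:
  assumes "length i = length Ns" "x < length Ns" "Ns ! x \<ge> 1"
  shows "fourier_mat Ns i (fourier_unit Ns x) = exp (2 * of_real pi * \<i> * of_nat (i ! x) / of_nat (Ns ! x))"
proof -
  have "fourier_mat Ns i (fourier_unit Ns x) =
      (\<Prod>y<length Ns. if y = x then exp (2 * of_real pi * \<i> * of_nat (i ! x * (1 mod Ns ! x)) / of_nat (Ns ! x)) else 1)"
    unfolding fourier_mat_def by (rule prod.cong) (simp_all add: fourier_unit_def)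
  also have "\<dots> = exp (2 * of_real pi * \<i> * of_nat (i ! x * (1 mod Ns ! x)) / of_nat (Ns ! x))"
    using assms(2) by (simp only: prod.delta finite_lessThan lessThan_iff if_True)
  also have "\<dots> = exp (2 * of_real pi * \<i> * of_nat (i ! x) / of_nat (Ns ! x))"
    by (subst complex_root_unity_eq) (use assms(3) in \<open>simp_all add: mod_mult_right_eq\<close>)
  finally show ?thesis .
qed

lemma fourier_mat_row_inj:
  assumes pos: "\<forall>x<length Ns. Ns ! x \<ge> 1" and "i \<in> fourier_index Ns" "i' \<in> fourier_index Ns"
    and rows: "\<forall>j\<in>fourier_index Ns. fourier_mat Ns i j = fourier_mat Ns i' j"
  shows "i = i'"
proof (rule nth_equalityI)
  show "length i = length i'" using assms by (simp add: fourier_index_def)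
  fix x assume "x < length i"
  then have x: "x < length Ns" "Ns ! x \<ge> 1" and lt: "i ! x < Ns ! x" "i' ! x < Ns ! x"
    using assms by (auto simp: fourier_index_def)
  have "fourier_mat Ns i (fourier_unit Ns x) = fourier_mat Ns i' (fourier_unit Ns x)"
    using rows fourier_unit_in_index[OF pos x(1)] by blast
  then have "exp (2 * of_real pi * \<i> * of_nat (i ! x) / of_nat (Ns ! x)) =
             exp (2 * of_real pi * \<i> * of_nat (i' ! x) / of_nat (Ns ! x))"
    using assms x by (simp add: fourier_mat_unit fourier_index_def)
  then have "i ! x mod Ns ! x = i' ! x mod Ns ! x"
    using x(2) by (simp add: complex_root_unity_eq)
  then show "i ! x = i' ! x" using lt by simp
qed

lemma character_eq_on_fourier_units:
  assumes pos: "\<forall>x<length Ns. Ns ! x \<ge> 1"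
    and c: "character (fourier_group Ns) c" and d: "character (fourier_group Ns) d"
    and units: "\<forall>x<length Ns. c (fourier_unit Ns x) = d (fourier_unit Ns x)"
    and i: "i \<in> fourier_index Ns"
  shows "c i = d i"
  using i
proof (induction "sum_list i" arbitrary: i rule: less_induct)
  case less
  have monoid: "monoid (fourier_group Ns)"
    using fourier_group_comm_group[OF pos] by (simp add: comm_group_def group_def)
  have li: "length i = length Ns" and lt: "\<forall>x<length Ns. i ! x < Ns ! x"
    using less.prems by (auto simp: fourier_index_def)
  show ?case
  proof (cases "\<forall>x<length Ns. i ! x = 0")
    case True
    then have "i = \<one>\<^bsub>fourier_group Ns\<^esub>" using li by (simp add: list_eq_iff_nth_eq)
    then show ?thesis using character_one[OF monoid c] character_one[OF monoid d] by simp
  next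
    case False
    then obtain x where x: "x < length Ns" "i ! x > 0" by auto
    then have N: "Ns ! x \<ge> 2" using lt by fastforce
    define i' where "i' = i[x := i ! x - 1]"
    have i': "i' \<in> fourier_index Ns"
      using less.prems x by (auto simp: i'_def fourier_index_def nth_list_update)
    have e: "fourier_unit Ns x \<in> fourier_index Ns" using fourier_unit_in_index[OF pos x(1)] .
    have "sum_list i' < sum_list i"
      using x li elem_le_sum_list[of x i] by (simp add: i'_def sum_list_update)
    then have IH: "c i' = d i'" using less.hyps i' by blast
    have "i = i' \<otimes>\<^bsub>fourier_group Ns\<^esub> fourier_unit Ns x"
      using li lt x N by (auto simp: fourier_group_mult fourier_unit_def i'_def nth_list_update
          intro!: nth_equalityI)
    then show ?thesis using c d IH units x i' e by (simp add: character_def)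
  qed
qed

lemma character_is_fourier_row:
  assumes pos: "\<forall>x<length Ns. Ns ! x \<ge> 1" and c: "character (fourier_group Ns) c"
  shows "\<exists>j\<in>fourier_index Ns. \<forall>i\<in>fourier_index Ns. c i = fourier_mat Ns i j"
proof -
  have monoid: "monoid (fourier_group Ns)"
    using fourier_group_comm_group[OF pos] by (simp add: comm_group_def group_def)
  have "\<exists>k. k < Ns ! x \<and> c (fourier_unit Ns x) = exp (2 * of_real pi * \<i> * of_nat k / of_nat (Ns ! x))"
    if x: "x < length Ns" for x
  proof -
    have "c (fourier_unit Ns x) ^ (Ns ! x) = c (fourier_unit Ns x [^]\<^bsub>fourier_group Ns\<^esub> (Ns ! x))"
      using character_nat_pow[OF monoid c] fourier_unit_in_index[OF pos x] by simp
    also have "\<dots> = 1"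
      unfolding fourier_unit_order by (rule character_one[OF monoid c])
    finally have "c (fourier_unit Ns x) \<in> {z. z ^ (Ns ! x) = 1}" by simp
    then show ?thesis using pos x by (subst (asm) complex_roots_unity) auto
  qed
  then obtain k where k: "\<And>x. x < length Ns \<Longrightarrow>
      k x < Ns ! x \<and> c (fourier_unit Ns x) = exp (2 * of_real pi * \<i> * of_nat (k x) / of_nat (Ns ! x))"
    by metis
  define j where "j = map k [0..<length Ns]"
  have j: "j \<in> fourier_index Ns" using k by (simp add: j_def fourier_index_def)
  have "c i = fourier_mat Ns i j" if "i \<in> fourier_index Ns" for i
  proof (rule character_eq_on_fourier_units[OF pos c character_fourier_row[OF pos] _ that], intro allI impI)
    fix x assume x: "x < length Ns"
    have "fourier_mat Ns (fourier_unit Ns x) j = fourier_mat Ns j (fourier_unit Ns x)"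
      by (rule fourier_mat_sym)
    also have "\<dots> = c (fourier_unit Ns x)"
      using x pos k[OF x] by (simp add: fourier_mat_unit j_def)
    finally show "c (fourier_unit Ns x) = fourier_mat Ns (fourier_unit Ns x) j" by simp
  qed
  then show ?thesis using j by blast
qed

lemma idx_mult_perm_mat_transpose:
  assumes "finite S" "\<chi>' a \<in> S" "\<chi>'' b \<in> S"
  shows "idx_mult S (idx_mult S (perm_mat \<chi>') F) (idx_transpose (perm_mat \<chi>'')) a b = F (\<chi>' a) (\<chi>'' b)"
proof -
  have row: "idx_mult S (perm_mat \<chi>') F a j = F (\<chi>' a) j" for j
  proof -
    have "idx_mult S (perm_mat \<chi>') F a j = (\<Sum>k\<in>S. if \<chi>' a = k then F k j else 0)"
      unfolding idx_mult_def perm_mat_def by (rule sum.cong) auto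
    then show ?thesis using assms by simp
  qed
  have "idx_mult S (idx_mult S (perm_mat \<chi>') F) (idx_transpose (perm_mat \<chi>'')) a b =
      (\<Sum>k\<in>S. if \<chi>'' b = k then F (\<chi>' a) k else 0)"
    unfolding idx_mult_def[of S "idx_mult S (perm_mat \<chi>') F"] row
    by (rule sum.cong) (auto simp: perm_mat_def idx_transpose_def)
  then show ?thesis using assms by simp
qed

lemma fourier_perm_equivalence_iso:
  assumes posN: "\<forall>x<length Ns. Ns ! x \<ge> 1" and posM: "\<forall>x<length Ms. Ms ! x \<ge> 1"
    and \<chi>': "bij_betw \<chi>' (fourier_index Ms) (fourier_index Ns)"
    and \<chi>'': "bij_betw \<chi>'' (fourier_index Ms) (fourier_index Ns)"
    and entries: "\<And>a b. a \<in> fourier_index Ms \<Longrightarrow> b \<in> fourier_index Ms \<Longrightarrow>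
                   fourier_mat Ns (\<chi>' a) (\<chi>'' b) = fourier_mat Ms a b"
  shows "\<chi>' \<in> iso (fourier_group Ms) (fourier_group Ns)"
proof -
  interpret N: comm_group "fourier_group Ns" by (rule fourier_group_comm_group[OF posN])
  interpret M: comm_group "fourier_group Ms" by (rule fourier_group_comm_group[OF posM])
  have "\<chi>' \<in> hom (fourier_group Ms) (fourier_group Ns)"
  proof (rule homI)
    fix a assume "a \<in> carrier (fourier_group Ms)"
    then show "\<chi>' a \<in> carrier (fourier_group Ns)" using \<chi>' by (simp add: bij_betwE)
  next
    fix a a' assume "a \<in> carrier (fourier_group Ms)" "a' \<in> carrier (fourier_group Ms)"
    then have a: "a \<in> fourier_index Ms" "a' \<in> fourier_index Ms"
      and aa': "a \<otimes>\<^bsub>fourier_group Ms\<^esub> a' \<in> fourier_index Ms"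
      using M.m_closed by auto
    have \<chi>'a: "\<chi>' a \<in> fourier_index Ns" "\<chi>' a' \<in> fourier_index Ns"
      using a \<chi>' by (auto simp: bij_betwE)
    show "\<chi>' (a \<otimes>\<^bsub>fourier_group Ms\<^esub> a') = \<chi>' a \<otimes>\<^bsub>fourier_group Ns\<^esub> \<chi>' a'"
    proof (rule fourier_mat_row_inj[OF posN])
      show "\<chi>' (a \<otimes>\<^bsub>fourier_group Ms\<^esub> a') \<in> fourier_index Ns" using aa' \<chi>' by (simp add: bij_betwE)
      show "\<chi>' a \<otimes>\<^bsub>fourier_group Ns\<^esub> \<chi>' a' \<in> fourier_index Ns"
        using N.m_closed \<chi>'a by simp
      show "\<forall>j\<in>fourier_index Ns. fourier_mat Ns (\<chi>' (a \<otimes>\<^bsub>fourier_group Ms\<^esub> a')) j =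
          fourier_mat Ns (\<chi>' a \<otimes>\<^bsub>fourier_group Ns\<^esub> \<chi>' a') j"
      proof
        fix j assume "j \<in> fourier_index Ns"
        then obtain b where b: "b \<in> fourier_index Ms" "j = \<chi>'' b"
          using \<chi>'' by (auto simp: bij_betw_def)
        have "fourier_mat Ns (\<chi>' (a \<otimes>\<^bsub>fourier_group Ms\<^esub> a')) j = fourier_mat Ms (a \<otimes>\<^bsub>fourier_group Ms\<^esub> a') b"
          using entries aa' b by simp
        also have "\<dots> = fourier_mat Ms a b * fourier_mat Ms a' b"
          using character_fourier_row[OF posM] a by (simp add: character_def)
        also have "\<dots> = fourier_mat Ns (\<chi>' a) j * fourier_mat Ns (\<chi>' a') j"
          using entries a b by simp
        also have "\<dots> = fourier_mat Ns (\<chi>' a \<otimes>\<^bsub>fourier_group Ns\<^esub> \<chi>' a') j"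
          using character_fourier_row[OF posN] \<chi>'a by (simp add: character_def)
        finally show "fourier_mat Ns (\<chi>' (a \<otimes>\<^bsub>fourier_group Ms\<^esub> a')) j =
          fourier_mat Ns (\<chi>' a \<otimes>\<^bsub>fourier_group Ns\<^esub> \<chi>' a') j" .
      qed
    qed
  qed
  then show ?thesis using \<chi>' by (simp add: iso_def)
qed

lemma fourier_iso_perm_equivalence:
  assumes posN: "\<forall>x<length Ns. Ns ! x \<ge> 1" and posM: "\<forall>x<length Ms. Ms ! x \<ge> 1"
    and \<psi>: "\<psi> \<in> iso (fourier_group Ns) (fourier_group Ms)"
  shows "\<exists>\<chi>''. bij_betw \<chi>'' (fourier_index Ms) (fourier_index Ns) \<and>
    (\<forall>a\<in>fourier_index Ms. \<forall>b\<in>fourier_index Ms.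
       fourier_mat Ns (inv_into (fourier_index Ns) \<psi> a) (\<chi>'' b) = fourier_mat Ms a b)"
proof -
  let ?\<chi>' = "inv_into (fourier_index Ns) \<psi>"
  have \<psi>_bij: "bij_betw \<psi> (fourier_index Ns) (fourier_index Ms)"
    and \<psi>_hom: "\<psi> \<in> hom (fourier_group Ns) (fourier_group Ms)"
    using \<psi> by (auto simp: iso_def)
  have "\<exists>j\<in>fourier_index Ns. \<forall>i\<in>fourier_index Ns. fourier_mat Ms (\<psi> i) b = fourier_mat Ns i j" for b
    using character_is_fourier_row[OF posN character_comp_hom[OF character_fourier_row[OF posM] \<psi>_hom]] .
  then obtain \<chi>'' where \<chi>''_in: "\<And>b. \<chi>'' b \<in> fourier_index Ns"
    and \<chi>''_col: "\<And>b i. i \<in> fourier_index Ns \<Longrightarrow> fourier_mat Ms (\<psi> i) b = fourier_mat Ns i (\<chi>'' b)"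
    by metis
  have entries: "fourier_mat Ns (?\<chi>' a) (\<chi>'' b) = fourier_mat Ms a b" if "a \<in> fourier_index Ms" for a b
    using \<chi>''_col[of "?\<chi>' a" b] that \<psi>_bij
    by (simp add: bij_betw_inv_into_right bij_betw_imp_surj_on inv_into_into)
  have "inj_on \<chi>'' (fourier_index Ms)"
  proof (rule inj_onI)
    fix b b' assume b: "b \<in> fourier_index Ms" "b' \<in> fourier_index Ms" and eq: "\<chi>'' b = \<chi>'' b'"
    show "b = b'"
    proof (rule fourier_mat_row_inj[OF posM b], rule ballI)
      fix a assume "a \<in> fourier_index Ms"
      then show "fourier_mat Ms b a = fourier_mat Ms b' a"
        using entries[of a b] entries[of a b'] eq by (simp add: fourier_mat_sym[of Ms _ a])
    qed
  qed
  moreover have "card (fourier_index Ms) = card (fourier_index Ns)"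
    using bij_betw_same_card[OF \<psi>_bij] by simp
  ultimately have "bij_betw \<chi>'' (fourier_index Ms) (fourier_index Ns)"
    using \<chi>''_in finite_fourier_index
    by (metis bij_betw_def card_image card_subset_eq image_subsetI)
  then show ?thesis using entries by blast
qed

theorem corollary4p5:
  fixes Ns Ms :: "nat list"
  assumes "Ns \<noteq> []" and "Ms \<noteq> []"
    and "\<forall>x<length Ns. Ns ! x \<ge> 1" and "\<forall>x<length Ms. Ms ! x \<ge> 1"
    and "prod_list Ns = prod_list Ms"
  shows "(\<exists>\<chi>' \<chi>''. bij_betw \<chi>' (fourier_index Ms) (fourier_index Ns)
                 \<and> bij_betw \<chi>'' (fourier_index Ms) (fourier_index Ns)
                 \<and> (\<forall>a\<in>fourier_index Ms. \<forall>b\<in>fourier_index Ms.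
                      idx_mult (fourier_index Ns)
                        (idx_mult (fourier_index Ns) (perm_mat \<chi>') (fourier_mat Ns))
                        (idx_transpose (perm_mat \<chi>'')) a b
                      = fourier_mat Ms a b))
         \<longleftrightarrow> fourier_group Ns \<cong> fourier_group Ms"
    (is "(\<exists>\<chi>' \<chi>''. ?bij \<chi>' \<and> ?bij \<chi>'' \<and> ?equiv \<chi>' \<chi>'') \<longleftrightarrow> _")
proof -
  note posN = assms(3) and posM = assms(4)
  have perm_entries: "?equiv \<chi>' \<chi>'' \<longleftrightarrow> (\<forall>a\<in>fourier_index Ms. \<forall>b\<in>fourier_index Ms.
      fourier_mat Ns (\<chi>' a) (\<chi>'' b) = fourier_mat Ms a b)" if "?bij \<chi>'" "?bij \<chi>''" for \<chi>' \<chi>''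
    using that finite_fourier_index by (simp add: idx_mult_perm_mat_transpose bij_betwE)
  show ?thesis
  proof
    assume "\<exists>\<chi>' \<chi>''. ?bij \<chi>' \<and> ?bij \<chi>'' \<and> ?equiv \<chi>' \<chi>''"
    then obtain \<chi>' \<chi>'' where "?bij \<chi>'" "?bij \<chi>''" "?equiv \<chi>' \<chi>''" by blast
    then have "\<chi>' \<in> iso (fourier_group Ms) (fourier_group Ns)"
      using fourier_perm_equivalence_iso[OF posN posM] perm_entries by blast
    then show "fourier_group Ns \<cong> fourier_group Ms"
      using group.iso_sym[OF comm_group.axioms(2)[OF fourier_group_comm_group[OF posM]]] is_isoI
      by blast
  next
    assume "fourier_group Ns \<cong> fourier_group Ms"
    then obtain \<psi> where \<psi>: "\<psi> \<in> iso (fourier_group Ns) (fourier_group Ms)" by (auto simp: is_iso_def)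
    then have "?bij (inv_into (fourier_index Ns) \<psi>)"
      by (simp add: iso_def bij_betw_inv_into)
    then show "\<exists>\<chi>' \<chi>''. ?bij \<chi>' \<and> ?bij \<chi>'' \<and> ?equiv \<chi>' \<chi>''"
      using fourier_iso_perm_equivalence[OF posN posM \<psi>] perm_entries by blast
  qed
qed

end
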